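(* Let $R$ be an axis-aligned rectangle containing $O(n)$ sites in its interior, with $O(n)$ ports on its top side and right side. Let $W$ be the set of intersection points of the horizontal and vertical lines through the sites and ports. For $w\in W$, a candidate rectangle with bottom-left corner $w$ is an axis-aligned rectangle with bottom-left corner $w$ containing no site in its interior such that either (i) its right side passes through a site $s$ with $s_x>w_x$, $s_y>w_y$ and its top side lies on the horizontal line through a site lying above $s$, or (ii) symmetrically, its top side passes through a site $s$ with $s_x>w_x$, $s_y>w_y$ and its right side lies on the vertical line through a site lying to the right of $s$. Then the total number of distinct candidate rectangles over all $w\in W$ is $O(n^3)$.
   Context: For a point $p$, $p_x$ and $p_y$ denote its $x$- and $y$-coordinates. *)

theory Defs
  imports Main Complex_Main
begin

type_synonym point = "real \<times> real"

definition open_rect :: "point \<Rightarrow> point \<Rightarrow> point set" where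
  "open_rect a b = {p. fst a < fst p \<and> fst p < fst b \<and> snd a < snd p \<and> snd p < snd b}"

definition top_side :: "point \<Rightarrow> point \<Rightarrow> point set" where
  "top_side a b = {p. fst a \<le> fst p \<and> fst p \<le> fst b \<and> snd p = snd b}"

definition right_side :: "point \<Rightarrow> point \<Rightarrow> point set" where
  "right_side a b = {p. fst p = fst b \<and> snd a \<le> snd p \<and> snd p \<le> snd b}"

definition grid_pts :: "point set \<Rightarrow> point set \<Rightarrow> point set" where
  "grid_pts S P = {w. fst w \<in> fst ` (S \<union> P) \<and> snd w \<in> snd ` (S \<union> P)}"

definition candidate :: "point set \<Rightarrow> point \<Rightarrow> point \<Rightarrow> bool" where
  "candidate S w b \<longleftrightarrow>
     fst w < fst b \<and> snd w < snd b \<and> S \<inter> open_rect w b = {} \<and>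
     ((\<exists>s\<in>S. \<exists>t\<in>S. fst s > fst w \<and> snd s > snd w \<and>
          s \<in> right_side w b \<and> snd t > snd s \<and> snd b = snd t) \<or>
      (\<exists>s\<in>S. \<exists>t\<in>S. fst s > fst w \<and> snd s > snd w \<and>
          s \<in> top_side w b \<and> fst t > fst s \<and> fst b = fst t))"

definition candidates :: "point set \<Rightarrow> point set \<Rightarrow> (point \<times> point) set" where
  "candidates S P = {(w, b). w \<in> grid_pts S P \<and> candidate S w b}"

end

theory Submission
  imports Defs
begin

text \<open>For a fixed corner w, a candidate of type (i) is determined by the height of its top side:
  of two such rectangles with the same top, the right-side site of the narrower one would lie
  in the interior of the wider one. That height is a site coordinate, so each of the O(n^2)
  corners carries at most n candidates of type (i), and by the reflection in the diagonal
  at most n of type (ii).\<close>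

definition right_candidates :: "point set \<Rightarrow> point \<Rightarrow> point set" where
  "right_candidates S w = {b. S \<inter> open_rect w b = {} \<and>
     (\<exists>s\<in>S. \<exists>t\<in>S. fst s > fst w \<and> snd s > snd w \<and>
        s \<in> right_side w b \<and> snd t > snd s \<and> snd b = snd t)}"

definition top_candidates :: "point set \<Rightarrow> point \<Rightarrow> point set" where
  "top_candidates S w = {b. S \<inter> open_rect w b = {} \<and>
     (\<exists>s\<in>S. \<exists>t\<in>S. fst s > fst w \<and> snd s > snd w \<and>
        s \<in> top_side w b \<and> fst t > fst s \<and> fst b = fst t)}"

lemma candidate_imp_right_or_top_candidate:
  "candidate S w b \<Longrightarrow> b \<in> right_candidates S w \<union> top_candidates S w"
  unfolding candidate_def right_candidates_def top_candidates_def by blast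

lemma swap_mem_right_candidates_iff:
  "prod.swap b \<in> right_candidates (prod.swap ` S) (prod.swap w) \<longleftrightarrow> b \<in> top_candidates S w"
proof -
  have "prod.swap ` S \<inter> open_rect (prod.swap w) (prod.swap b) = prod.swap ` (S \<inter> open_rect w b)"
    unfolding open_rect_def by force
  moreover have "prod.swap s \<in> right_side (prod.swap w) (prod.swap b) \<longleftrightarrow> s \<in> top_side w b" for s
    unfolding right_side_def top_side_def by auto
  ultimately show ?thesis
    unfolding top_candidates_def right_candidates_def by auto
qed

lemma top_candidates_eq_swap_right_candidates:
  "top_candidates S w = prod.swap ` right_candidates (prod.swap ` S) (prod.swap w)"
proof (rule set_eqI)
  fix b :: point
  show "b \<in> top_candidates S w \<longleftrightarrow> b \<in> prod.swap ` right_candidates (prod.swap ` S) (prod.swap w)"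
    using swap_mem_right_candidates_iff[of b] by (cases b) simp
qed

lemma inj_on_snd_right_candidates: "inj_on snd (right_candidates S w)"
proof (rule inj_onI)
  have no_wider: False
    if c: "c \<in> right_candidates S w" and c': "c' \<in> right_candidates S w"
      and same_top: "snd c = snd c'" and narrower: "fst c < fst c'" for c c'
  proof -
    from c obtain s where "s \<in> S" "fst s > fst w" "snd s > snd w" "s \<in> right_side w c"
      "snd s < snd c"
      unfolding right_candidates_def by auto
    with same_top narrower have "s \<in> S \<inter> open_rect w c'"
      unfolding open_rect_def right_side_def by auto
    with c' show False
      unfolding right_candidates_def by blast
  qed
  fix b b' assume b: "b \<in> right_candidates S w" and b': "b' \<in> right_candidates S w"
    and same_top: "snd b = snd b'"
  have "fst b = fst b'"
    using no_wider[OF b b' same_top] no_wider[OF b' b same_top[symmetric]] by fastforce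
  with same_top show "b = b'"
    by (simp add: prod_eq_iff)
qed

lemma
  assumes "finite S"
  shows finite_right_candidates: "finite (right_candidates S w)"
    and card_right_candidates_le: "card (right_candidates S w) \<le> card S"
proof -
  have tops: "snd ` right_candidates S w \<subseteq> snd ` S"
    unfolding right_candidates_def by auto
  then have "finite (snd ` right_candidates S w)"
    using assms finite_subset by blast
  then show "finite (right_candidates S w)"
    using finite_imageD inj_on_snd_right_candidates by blast
  have "card (right_candidates S w) = card (snd ` right_candidates S w)"
    using card_image[OF inj_on_snd_right_candidates] by simp
  also have "\<dots> \<le> card (snd ` S)"
    using card_mono[OF _ tops] assms by simp
  also have "\<dots> \<le> card S"
    using card_image_le assms by blast
  finally show "card (right_candidates S w) \<le> card S" .
qed

lemma
  assumes "finite S"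
  shows finite_top_candidates: "finite (top_candidates S w)"
    and card_top_candidates_le: "card (top_candidates S w) \<le> card S"
proof -
  have fin: "finite (prod.swap ` S)" and card_eq: "card (prod.swap ` S) = card S"
    using assms by (simp_all add: card_image)
  show "finite (top_candidates S w)"
    unfolding top_candidates_eq_swap_right_candidates
    using finite_right_candidates[OF fin] by simp
  have "card (prod.swap ` right_candidates (prod.swap ` S) (prod.swap w))
      \<le> card (right_candidates (prod.swap ` S) (prod.swap w))"
    using finite_right_candidates[OF fin] by (rule card_image_le)
  also have "\<dots> \<le> card S"
    using card_right_candidates_le[OF fin] by (simp add: card_eq)
  finally show "card (top_candidates S w) \<le> card S"
    unfolding top_candidates_eq_swap_right_candidates .
qed

lemma
  assumes "finite S"
  shows finite_candidate_corners: "finite {b. candidate S w b}"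
    and card_candidate_corners_le: "card {b. candidate S w b} \<le> 2 * card S"
proof -
  let ?U = "right_candidates S w \<union> top_candidates S w"
  have sub: "{b. candidate S w b} \<subseteq> ?U"
    using candidate_imp_right_or_top_candidate by blast
  have fin: "finite ?U"
    using finite_right_candidates finite_top_candidates assms by blast
  then show "finite {b. candidate S w b}"
    using sub finite_subset by blast
  have "card {b. candidate S w b} \<le> card ?U"
    using card_mono[OF fin sub] .
  also have "\<dots> \<le> card (right_candidates S w) + card (top_candidates S w)"
    by (rule card_Un_le)
  also have "\<dots> \<le> 2 * card S"
    using card_right_candidates_le[OF assms, of w] card_top_candidates_le[OF assms, of w]
    by linarith
  finally show "card {b. candidate S w b} \<le> 2 * card S" .
qed

lemma grid_pts_eq_Times: "grid_pts S P = fst ` (S \<union> P) \<times> snd ` (S \<union> P)"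
  unfolding grid_pts_def by (simp add: set_eq_iff mem_Times_iff)

lemma
  assumes "finite S" "finite P"
  shows finite_grid_pts: "finite (grid_pts S P)"
    and card_grid_pts_le: "card (grid_pts S P) \<le> card (S \<union> P) ^ 2"
proof -
  have fin: "finite (S \<union> P)"
    using assms by simp
  then show "finite (grid_pts S P)"
    unfolding grid_pts_eq_Times by simp
  have "card (grid_pts S P) = card (fst ` (S \<union> P)) * card (snd ` (S \<union> P))"
    unfolding grid_pts_eq_Times by (rule card_cartesian_product)
  also have "\<dots> \<le> card (S \<union> P) * card (S \<union> P)"
    using card_image_le[OF fin] by (intro mult_le_mono)
  finally show "card (grid_pts S P) \<le> card (S \<union> P) ^ 2"
    by (simp add: power2_eq_square)
qed

lemma
  assumes "finite S" "finite P"
  shows finite_candidates: "finite (candidates S P)"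
    and card_candidates_le: "card (candidates S P) \<le> card (S \<union> P) ^ 2 * (2 * card S)"
proof -
  have eq: "candidates S P = Sigma (grid_pts S P) (\<lambda>w. {b. candidate S w b})"
    unfolding candidates_def by auto
  show "finite (candidates S P)"
    unfolding eq using finite_grid_pts[OF assms] finite_candidate_corners[OF assms(1)] by blast
  have "card (candidates S P) = (\<Sum>w\<in>grid_pts S P. card {b. candidate S w b})"
    unfolding eq using finite_grid_pts[OF assms] finite_candidate_corners[OF assms(1)]
    by (intro card_SigmaI) auto
  also have "\<dots> \<le> (\<Sum>w\<in>grid_pts S P. 2 * card S)"
    by (intro sum_mono card_candidate_corners_le[OF assms(1)])
  also have "\<dots> = card (grid_pts S P) * (2 * card S)"
    by simp
  also have "\<dots> \<le> card (S \<union> P) ^ 2 * (2 * card S)"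
    using card_grid_pts_le[OF assms] by (rule mult_le_mono1)
  finally show "card (candidates S P) \<le> card (S \<union> P) ^ 2 * (2 * card S)" .
qed

theorem lemma4:
  "\<exists>C::real. \<forall>(n::nat) (S::point set) (P::point set) (a::point) (b::point).
     finite S \<and> finite P \<and> card S \<le> n \<and> card P \<le> n \<and>
     fst a < fst b \<and> snd a < snd b \<and>
     S \<subseteq> open_rect a b \<and> P \<subseteq> top_side a b \<union> right_side a b \<longrightarrow>
     finite (candidates S P) \<and> real (card (candidates S P)) \<le> C * real n ^ 3"
proof (intro exI[of _ 8] allI impI conjI)
  fix n :: nat and S P :: "point set" and a b :: point
  assume "finite S \<and> finite P \<and> card S \<le> n \<and> card P \<le> n \<and>
     fst a < fst b \<and> snd a < snd b \<and>
     S \<subseteq> open_rect a b \<and> P \<subseteq> top_side a b \<union> right_side a b"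
  then have fin: "finite S" "finite P" and card_S: "card S \<le> n" and card_P: "card P \<le> n"
    by auto
  show "finite (candidates S P)"
    using finite_candidates[OF fin] .
  have "card (S \<union> P) \<le> 2 * n"
    using card_Un_le[of S P] card_S card_P by linarith
  then have "card (S \<union> P) ^ 2 * (2 * card S) \<le> (2 * n) ^ 2 * (2 * n)"
    using card_S by (intro mult_le_mono power_mono) auto
  with card_candidates_le[OF fin] have "card (candidates S P) \<le> (2 * n) ^ 2 * (2 * n)"
    by (rule order_trans)
  then have "card (candidates S P) \<le> 8 * n ^ 3"
    by (simp add: power2_eq_square power3_eq_cube)
  then have "real (card (candidates S P)) \<le> real (8 * n ^ 3)"
    by (simp only: of_nat_le_iff)
  then show "real (card (candidates S P)) \<le> 8 * real n ^ 3"
    by simp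
qed

end
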